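(* Let $Q,H\in\mathbb{S}^n$ and $\mathcal{B}=\{B^1,\dots,B^m\}\subseteq\mathbb{S}^n$. Assume $\mathcal{B}$ satisfies Condition (B): for every $k$, $$\{X\in\mathbb{S}^n_+ : B^k\bullet X=0\}\subseteq \mathbb{J}_+(\mathcal{B}):=\{X\in\mathbb{S}^n_+ : B^j\bullet X\ge 0\ (1\le j\le m)\}.$$ Let $\overline{X}\in\mathbb{S}^n$ satisfy the KKT conditions: $\overline{X}\in\mathbb{J}_+(\mathcal{B})$, $H\bullet\overline{X}=1$, and there exist $\bar t\in\mathbb{R}$, $\bar y\in\mathbb{R}^m$ with $\bar y\ge 0$, and $\overline{Y}\in\mathbb{S}^n_+$ such that $Q-\bar tH-\sum_{k=1}^m\bar y_kB^k=\overline{Y}$, $\bar y_k(B^k\bullet\overline{X})=0$ $(1\le k\le m)$ and $\overline{Y}\bullet\overline{X}=0$. Suppose that $B^k\bullet\overline{X}=0$ for some $k\in\{1,\dots,m\}$. Then, with $r=\operatorname{rank}\overline{X}$, there exist $x\in\mathbb{R}^n$ and $\tau\ge 1/r$ with $H\bullet xx^T=\tau$ such that $\widetilde{X}=xx^T/\tau$ is an optimal solution of the SDP $$\eta=\inf\{Q\bullet X : X\in\mathbb{J}_+(\mathcal{B}),\ H\bullet X=1\}$$ and also an optimal solution of the QCQP $$\zeta=\inf\{Q\bullet X : X\in\mathbb{J}_+(\mathcal{B}),\ \operatorname{rank}X= 1,\ H\bullet X=1\},$$ with $Q\bullet\widetilde{X}=Q\bullet\overline{X}$.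
   Context: $\mathbb{S}^n$ denotes the space of real $n\times n$ symmetric matrices, $\mathbb{S}^n_+$ its cone of positive semidefinite matrices, and $A\bullet X=\sum_{i,j}A_{ij}X_{ij}$ the trace inner product. *)

theory Defs
  imports "HOL-Analysis.Analysis"
begin

definition symmetric_mat :: "real^'n^'n \<Rightarrow> bool" where
  "symmetric_mat A \<longleftrightarrow> transpose A = A"

definition psd :: "real^'n^'n \<Rightarrow> bool" where
  "psd X \<longleftrightarrow> symmetric_mat X \<and> (\<forall>v. v \<bullet> (X *v v) \<ge> 0)"

definition frob :: "real^'n^'n \<Rightarrow> real^'n^'n \<Rightarrow> real" where
  "frob A X = (\<Sum>i\<in>UNIV. \<Sum>j\<in>UNIV. A$i$j * X$i$j)"

definition outer :: "real^'n \<Rightarrow> real^'n^'n" where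
  "outer x = (\<chi> i j. x$i * x$j)"

definition Jplus :: "nat \<Rightarrow> (nat \<Rightarrow> real^'n^'n) \<Rightarrow> (real^'n^'n) set" where
  "Jplus m B = {X. psd X \<and> (\<forall>j\<in>{1..m}. frob (B j) X \<ge> 0)}"

definition condition_B :: "nat \<Rightarrow> (nat \<Rightarrow> real^'n^'n) \<Rightarrow> bool" where
  "condition_B m B \<longleftrightarrow> (\<forall>k\<in>{1..m}. {X. psd X \<and> frob (B k) X = 0} \<subseteq> Jplus m B)"

definition sdp_feasible :: "nat \<Rightarrow> (nat \<Rightarrow> real^'n^'n) \<Rightarrow> real^'n^'n \<Rightarrow> (real^'n^'n) set" where
  "sdp_feasible m B H = {X. X \<in> Jplus m B \<and> frob H X = 1}"

definition qcqp_feasible :: "nat \<Rightarrow> (nat \<Rightarrow> real^'n^'n) \<Rightarrow> real^'n^'n \<Rightarrow> (real^'n^'n) set" where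
  "qcqp_feasible m B H = {X. X \<in> Jplus m B \<and> rank X = 1 \<and> frob H X = 1}"

definition optimal_in :: "real^'n^'n \<Rightarrow> (real^'n^'n) set \<Rightarrow> real^'n^'n \<Rightarrow> bool" where
  "optimal_in Q F X \<longleftrightarrow> X \<in> F \<and> (\<forall>Z\<in>F. frob Q X \<le> frob Q Z)"

end

(* Weak duality: writing Q = Ybar + tbar H + sum_k ybar_k B^k, every X in J_+(B) satisfies
   Q \<bullet> X >= tbar (H \<bullet> X), with equality at Xbar by complementary slackness.
   By Sturm and Zhang's rank-one decomposition, Xbar is a sum of terms x x^T with
   B^k \<bullet> x x^T = 0 for an active constraint k: a PSD matrix is a sum of rank-one terms,
   and two terms of opposite sign under B^k can be rotated in their plane into one term of
   sign zero plus a remainder.  Condition (B) puts every such term into J_+(B), and one of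
   them has H \<bullet> x x^T > 0.  The lower bound is tight on the sum, hence on each summand,
   so x x^T / (H \<bullet> x x^T) attains tbar, the common optimal value of the SDP and the QCQP. *)

theory Submission
  imports Defs "HOL-Library.Quadratic_Discriminant"
begin

lemma frob_add_left: "frob (A + B) X = frob A X + frob B X"
  by (simp add: frob_def algebra_simps sum.distrib)

lemma frob_scaleR_left: "frob (c *\<^sub>R A) X = c * frob A X"
  by (simp add: frob_def algebra_simps sum_distrib_left)

lemma frob_sum_left: "finite K \<Longrightarrow> frob (\<Sum>k\<in>K. A k) X = (\<Sum>k\<in>K. frob (A k) X)"
  by (induction K rule: finite_induct) (simp_all add: frob_add_left frob_def[of 0])

lemma frob_add_right: "frob A (X + Y) = frob A X + frob A Y"
  by (simp add: frob_def algebra_simps sum.distrib)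

lemma frob_scaleR_right: "frob A (c *\<^sub>R X) = c * frob A X"
  by (simp add: frob_def algebra_simps sum_distrib_left)

lemma frob_diff_right: "frob A (X - Y) = frob A X - frob A Y"
  by (simp add: frob_def algebra_simps sum_subtractf)

lemma frob_sum_list_right: "frob A (\<Sum>v\<leftarrow>vs. f v) = (\<Sum>v\<leftarrow>vs. frob A (f v))"
  by (induction vs) (simp_all add: frob_add_right frob_def[of _ 0])

lemma frob_outer: "frob A (outer v) = v \<bullet> (A *v v)"
  by (simp add: frob_def outer_def inner_vec_def matrix_vector_mult_def sum_distrib_left
      algebra_simps)

lemma outer_scaleR: "outer (c *\<^sub>R v) = c\<^sup>2 *\<^sub>R outer v"
  by (simp add: outer_def vec_eq_iff power2_eq_square algebra_simps)

lemma outer_rotation: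
  "outer (c *\<^sub>R v + w) + outer (c *\<^sub>R w - v) = (1 + c\<^sup>2) *\<^sub>R (outer v + outer w)"
  by (simp add: outer_def vec_eq_iff power2_eq_square algebra_simps)

lemma inner_outer_mult: "w \<bullet> (outer v *v w) = (v \<bullet> w)\<^sup>2"
  by (simp add: outer_def inner_vec_def matrix_vector_mult_def sum_distrib_left power2_eq_square
      sum_product algebra_simps)

lemma symmetric_mat_iff: "symmetric_mat A \<longleftrightarrow> (\<forall>i j. A$i$j = A$j$i)"
  unfolding symmetric_mat_def transpose_def vec_eq_iff by auto

lemma psd_outer: "psd (outer v)"
  by (simp add: psd_def symmetric_mat_iff inner_outer_mult) (simp add: outer_def mult.commute)

lemma psd_add: "psd A \<Longrightarrow> psd B \<Longrightarrow> psd (A + B)"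
  by (simp add: psd_def symmetric_mat_iff matrix_vector_mult_add_rdistrib inner_add_right)

lemma psd_sum_list_outer: "psd (\<Sum>v\<leftarrow>vs. outer v)"
  by (induction vs) (simp_all add: psd_add psd_outer psd_def[of 0] symmetric_mat_iff)

lemma rank_outer:
  assumes "x \<noteq> 0"
  shows "rank (outer x) = 1"
proof -
  have "outer x = (\<chi> i (_::1). x$i) ** (\<chi> _ j. x$j)"
    by (simp add: outer_def matrix_matrix_mult_def vec_eq_iff)
  then have "rank (outer x) \<le> 1"
    by (metis rank_mul_le_left rank_bound min.bounded_iff order_trans CARD_1)
  moreover obtain i where "x$i \<noteq> 0"
    using assms by (auto simp: vec_eq_iff)
  then have "outer x \<noteq> 0"
    by (auto simp: outer_def vec_eq_iff)
  ultimately show ?thesis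
    using rank_eq_0 by (metis le_neq_implies_less less_one)
qed

lemma symmetric_mat_inner_commute: "symmetric_mat X \<Longrightarrow> u \<bullet> (X *v w) = w \<bullet> (X *v u)"
  unfolding symmetric_mat_def by (metis dot_lmul_matrix inner_commute vector_transpose_matrix)

lemma quadratic_form_add_scaleR:
  assumes "symmetric_mat X"
  shows "(u + t *\<^sub>R w) \<bullet> (X *v (u + t *\<^sub>R w))
           = u \<bullet> (X *v u) + 2 * t * (u \<bullet> (X *v w)) + t\<^sup>2 * (w \<bullet> (X *v w))"
  using symmetric_mat_inner_commute[OF assms, of w u]
  by (simp add: power2_eq_square algebra_simps)

lemma inner_axis_mult_axis: "axis i 1 \<bullet> (X *v axis j 1) = X$i$j"
  by (simp add: inner_axis' matrix_vector_mult_basis column_def)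

lemma psd_diag_nonneg: "psd X \<Longrightarrow> 0 \<le> X$k$k"
  unfolding psd_def by (metis inner_axis_mult_axis)

lemma psd_row_zero_if_diag_zero:
  assumes X: "psd X" and zero: "X$k$k = 0"
  shows "X$k$j = 0"
proof (rule ccontr)
  assume nz: "X$k$j \<noteq> 0"
  define t where "t = - (X$j$j + 1) / (2 * X$k$j)"
  have "0 \<le> (axis j 1 + t *\<^sub>R axis k 1) \<bullet> (X *v (axis j 1 + t *\<^sub>R axis k 1))"
    using X by (simp add: psd_def)
  also have "\<dots> = X$j$j + 2 * t * X$k$j"
    using X zero by (simp add: psd_def quadratic_form_add_scaleR inner_axis_mult_axis
        symmetric_mat_iff)
  also have "\<dots> = -1"
    using nz by (simp add: t_def field_simps)
  finally show False by simp
qed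

text \<open>One elimination step of a Cholesky factorisation.\<close>
lemma psd_diff_outer_pivot:
  fixes X :: "real^'n^'n"
  assumes X: "psd X" and pivot: "X$k$k > 0"
  defines "v \<equiv> (1 / sqrt (X$k$k)) *\<^sub>R (X *v axis k 1)"
  shows "psd (X - outer v)" and "(X - outer v)$k$j = 0"
    and "(\<forall>j. X$i$j = 0) \<Longrightarrow> (X - outer v)$i$j = 0"
proof -
  have sym: "symmetric_mat X"
    using X by (simp add: psd_def)
  have outer_v: "outer v $ i $ j = X$i$k * X$j$k / X$k$k" for i j
    using pivot by (simp add: v_def outer_def inner_axis_mult_axis[symmetric] inner_axis'
        real_sqrt_mult[symmetric])
  show "(X - outer v)$k$j = 0"
    using pivot sym by (simp add: outer_v symmetric_mat_iff)
  show "(\<forall>j. X$i$j = 0) \<Longrightarrow> (X - outer v)$i$j = 0"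
    by (simp add: outer_v)
  have "0 \<le> w \<bullet> ((X - outer v) *v w)" for w
  proof -
    define b where "b = axis k 1 \<bullet> (X *v w)"
    define s where "s = - b / X$k$k"
    have "v \<bullet> w = b / sqrt (X$k$k)"
      using symmetric_mat_inner_commute[OF sym, of "axis k 1" w]
      by (simp add: v_def b_def inner_commute)
    then have "w \<bullet> ((X - outer v) *v w) = w \<bullet> (X *v w) - b\<^sup>2 / X$k$k"
      using pivot by (simp add: matrix_vector_mult_diff_rdistrib inner_diff_right
          inner_outer_mult power_divide)
    also have "\<dots> = w \<bullet> (X *v w) + 2 * s * b + s\<^sup>2 * X$k$k"
      using pivot by (simp add: s_def power2_eq_square field_simps)
    also have "\<dots> = (w + s *\<^sub>R axis k 1) \<bullet> (X *v (w + s *\<^sub>R axis k 1))"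
      using symmetric_mat_inner_commute[OF sym, of w "axis k 1"]
      by (simp add: quadratic_form_add_scaleR[OF sym] inner_axis_mult_axis b_def)
    also have "\<dots> \<ge> 0"
      using X by (simp add: psd_def)
    finally show ?thesis .
  qed
  then show "psd (X - outer v)"
    using sym psd_outer[of v] by (simp add: psd_def symmetric_mat_iff)
qed

lemma psd_eq_sum_list_outer_if_rows_zero:
  fixes X :: "real^'n^'n" and I :: "'n set"
  assumes "psd X" and "\<And>i j. i \<notin> I \<Longrightarrow> X$i$j = 0"
  shows "\<exists>vs. X = (\<Sum>v\<leftarrow>vs. outer v)"
  using finite[of I] assms
proof (induction I arbitrary: X rule: finite_induct)
  case empty
  then have "X = 0"
    by (simp add: vec_eq_iff)
  then show ?case
    by (metis list.map(1) sum_list.Nil)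
next
  case (insert k I)
  show ?case
  proof (cases "X$k$k = 0")
    case True
    have "X$i$j = 0" if "i \<notin> I" for i j
      using that True insert.prems psd_row_zero_if_diag_zero by (cases "i = k") auto
    then show ?thesis
      using insert.IH insert.prems(1) by blast
  next
    case False
    then have pivot: "X$k$k > 0"
      using psd_diag_nonneg insert.prems(1) by (metis order_le_less)
    define v where "v = (1 / sqrt (X$k$k)) *\<^sub>R (X *v axis k 1)"
    note step = psd_diff_outer_pivot[OF insert.prems(1) pivot, folded v_def]
    have "(X - outer v)$i$j = 0" if "i \<notin> I" for i j
      using that step(2,3) insert.prems(2) by (cases "i = k") auto
    then obtain vs where "X - outer v = (\<Sum>v\<leftarrow>vs. outer v)"
      using insert.IH step(1) by blast
    then have "X = (\<Sum>v\<leftarrow>v # vs. outer v)"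
      by (simp add: algebra_simps)
    then show ?thesis ..
  qed
qed

lemma psd_eq_sum_list_outer:
  fixes X :: "real^'n^'n"
  assumes "psd X"
  shows "\<exists>vs. X = (\<Sum>v\<leftarrow>vs. outer v)"
  using psd_eq_sum_list_outer_if_rows_zero[OF assms, of UNIV] by simp

lemma frob_psd_nonneg:
  assumes "psd Y" and "psd X"
  shows "0 \<le> frob Y X"
proof -
  obtain vs where "X = (\<Sum>v\<leftarrow>vs. outer v)"
    using psd_eq_sum_list_outer assms(2) by blast
  then have "frob Y X = (\<Sum>v\<leftarrow>vs. v \<bullet> (Y *v v))"
    by (simp add: frob_sum_list_right frob_outer)
  also have "\<dots> \<ge> 0"
    using assms(1) unfolding psd_def by (intro sum_list_nonneg) auto
  finally show ?thesis .
qed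

lemma outer_add_eq_with_frob_zero:
  assumes pos: "frob B (outer v) > 0" and neg: "frob B (outer w) < 0"
  obtains a b where "outer a + outer b = outer v + outer w" and "frob B (outer a) = 0"
proof -
  define p where "p = frob B (outer v)"
  define q where "q = v \<bullet> (B *v w) + w \<bullet> (B *v v)"
  define r where "r = frob B (outer w)"
  have expand: "frob B (outer (c *\<^sub>R v + w)) = p * c\<^sup>2 + q * c + r" for c
    by (simp add: p_def q_def r_def frob_outer power2_eq_square algebra_simps)
  have "p * r < 0"
    using mult_pos_neg[OF pos neg] by (simp add: p_def r_def)
  then have "discrim p q r \<ge> 0"
    unfolding discrim_def mult.assoc using zero_le_power2[of q] by linarith
  then obtain c where "p * c\<^sup>2 + q * c + r = 0"
    using discriminant_nonneg_ex pos by (metis p_def less_irrefl)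
  then have root: "frob B (outer (c *\<^sub>R v + w)) = 0"
    by (simp add: expand)
  define k where "k = 1 / sqrt (1 + c\<^sup>2)"
  have "k\<^sup>2 * (1 + c\<^sup>2) = 1"
    by (simp add: k_def power_divide add_nonneg_eq_0_iff)
  then have "outer (k *\<^sub>R (c *\<^sub>R v + w)) + outer (k *\<^sub>R (c *\<^sub>R w - v)) = outer v + outer w"
    by (simp add: outer_scaleR scaleR_add_right[symmetric] outer_rotation)
  moreover have "frob B (outer (k *\<^sub>R (c *\<^sub>R v + w))) = 0"
    by (simp add: outer_scaleR frob_scaleR_right root)
  ultimately show thesis
    using that by blast
qed

lemma sum_list_outer_split_frob_zero:
  assumes zero: "frob B (\<Sum>v\<leftarrow>vs. outer v) = 0" and nonempty: "vs \<noteq> []"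
  obtains a us where "(\<Sum>v\<leftarrow>vs. outer v) = outer a + (\<Sum>u\<leftarrow>us. outer u)"
    and "length us < length vs" and "frob B (outer a) = 0"
proof (cases "\<exists>v\<in>set vs. frob B (outer v) = 0")
  case True
  then obtain v where "v \<in> set vs" and "frob B (outer v) = 0"
    by blast
  then show thesis
    using that[of v "remove1 v vs"] sum_list_map_remove1[of v vs outer] length_pos_if_in_set[of v vs]
    by (simp add: length_remove1)
next
  case False
  have sum_zero: "(\<Sum>v\<leftarrow>vs. frob B (outer v)) = 0"
    using zero by (simp add: frob_sum_list_right)
  have "\<exists>v\<in>set vs. frob B (outer v) > 0"
  proof (rule ccontr)
    assume "\<not> ?thesis"
    then have "(\<Sum>v\<leftarrow>vs. frob B (outer v)) < (\<Sum>v\<leftarrow>vs. 0)"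
      using False nonempty by (intro sum_list_strict_mono) (auto simp: not_less order_le_less)
    then show False
      using sum_zero by simp
  qed
  then obtain v where v: "v \<in> set vs" "frob B (outer v) > 0"
    by blast
  have "\<exists>w\<in>set vs. frob B (outer w) < 0"
  proof (rule ccontr)
    assume "\<not> ?thesis"
    then have "(\<Sum>v\<leftarrow>vs. 0) < (\<Sum>v\<leftarrow>vs. frob B (outer v))"
      using False nonempty by (intro sum_list_strict_mono) (auto simp: not_less order_le_less)
    then show False
      using sum_zero by simp
  qed
  then obtain w where w: "w \<in> set vs" "frob B (outer w) < 0"
    by blast
  obtain a b where ab: "outer a + outer b = outer v + outer w" "frob B (outer a) = 0"
    using outer_add_eq_with_frob_zero[OF v(2) w(2)] .
  define rest where "rest = remove1 w (remove1 v vs)"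
  have w_rest: "w \<in> set (remove1 v vs)"
    using v w by (metis in_set_remove1 less_asym)
  have "(\<Sum>v\<leftarrow>vs. outer v) = outer v + outer w + (\<Sum>u\<leftarrow>rest. outer u)"
    using sum_list_map_remove1[OF v(1), of outer] sum_list_map_remove1[OF w_rest, of outer]
    by (simp add: rest_def add.assoc)
  also have "\<dots> = outer a + (\<Sum>u\<leftarrow>b # rest. outer u)"
    using ab(1) by (simp add: add.assoc)
  finally have "(\<Sum>v\<leftarrow>vs. outer v) = outer a + (\<Sum>u\<leftarrow>b # rest. outer u)" .
  moreover have "length (b # rest) < length vs"
    using w_rest length_pos_if_in_set[OF w_rest] by (simp add: rest_def length_remove1 v(1))
  ultimately show thesis
    using that ab(2) by blast
qed

lemma sum_list_outer_eq_frob_zero_summands: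
  assumes "frob B (\<Sum>v\<leftarrow>vs. outer v) = 0"
  shows "\<exists>ws. (\<Sum>v\<leftarrow>vs. outer v) = (\<Sum>w\<leftarrow>ws. outer w) \<and> (\<forall>w\<in>set ws. frob B (outer w) = 0)"
  using assms
proof (induction vs rule: length_induct)
  case (1 vs)
  show ?case
  proof (cases "vs = []")
    case True
    then show ?thesis
      by (intro exI[of _ "[]"]) simp
  next
    case False
    obtain a us where split: "(\<Sum>v\<leftarrow>vs. outer v) = outer a + (\<Sum>u\<leftarrow>us. outer u)"
      "length us < length vs" "frob B (outer a) = 0"
      using sum_list_outer_split_frob_zero[OF "1.prems" False] .
    have "frob B (\<Sum>u\<leftarrow>us. outer u) = 0"
      using "1.prems" split by (simp add: frob_add_right)
    then obtain ws where "(\<Sum>u\<leftarrow>us. outer u) = (\<Sum>w\<leftarrow>ws. outer w)"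
      "\<forall>w\<in>set ws. frob B (outer w) = 0"
      using "1.IH" split(2) by blast
    then show ?thesis
      using split by (intro exI[of _ "a # ws"]) auto
  qed
qed

lemma psd_outer_summand_frob_zero:
  assumes "psd X" and "frob B X = 0" and "frob H X > 0"
  obtains x where "frob B (outer x) = 0" and "frob H (outer x) > 0" and "psd (X - outer x)"
proof -
  obtain vs where "X = (\<Sum>v\<leftarrow>vs. outer v)"
    using psd_eq_sum_list_outer assms(1) by blast
  then obtain ws where ws: "X = (\<Sum>w\<leftarrow>ws. outer w)" "\<forall>w\<in>set ws. frob B (outer w) = 0"
    using sum_list_outer_eq_frob_zero_summands assms(2) by metis
  have "\<exists>w\<in>set ws. frob H (outer w) > 0"
  proof (rule ccontr)
    assume "\<not> ?thesis"
    then have "(\<Sum>w\<leftarrow>ws. frob H (outer w)) \<le> 0"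
      by (intro sum_list_nonpos) (auto simp: not_less)
    then show False
      using assms(3) ws(1) by (simp add: frob_sum_list_right)
  qed
  then obtain w where w: "w \<in> set ws" "frob H (outer w) > 0"
    by blast
  have "X - outer w = (\<Sum>u\<leftarrow>remove1 w ws. outer u)"
    using ws(1) sum_list_map_remove1[OF w(1), of outer] by simp
  then show thesis
    using that w ws(2) psd_sum_list_outer by metis
qed

lemma frob_eq_dual_decomposition:
  assumes "Q - t *\<^sub>R H - (\<Sum>k\<in>K. y k *\<^sub>R B k) = Y" and "finite K"
  shows "frob Q X = frob Y X + t * frob H X + (\<Sum>k\<in>K. y k * frob (B k) X)"
proof -
  have "Q = Y + t *\<^sub>R H + (\<Sum>k\<in>K. y k *\<^sub>R B k)"
    using assms(1) by (simp add: algebra_simps)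
  then show ?thesis
    using assms(2) by (simp add: frob_add_left frob_scaleR_left frob_sum_left)
qed

lemma weak_duality:
  assumes dual: "Q - t *\<^sub>R H - (\<Sum>k=1..m. y k *\<^sub>R B k) = Y"
    and "psd Y" and "\<forall>k\<in>{1..m}. 0 \<le> y k" and X: "X \<in> Jplus m B"
  shows "t * frob H X \<le> frob Q X"
proof -
  have "0 \<le> frob Y X"
    using assms(2) X by (simp add: Jplus_def frob_psd_nonneg)
  moreover have "0 \<le> (\<Sum>k=1..m. y k * frob (B k) X)"
    using assms(3) X by (intro sum_nonneg) (simp add: Jplus_def)
  ultimately show ?thesis
    using frob_eq_dual_decomposition[OF dual] by simp
qed

lemma Jplus_scaleR: "X \<in> Jplus m B \<Longrightarrow> 0 \<le> c \<Longrightarrow> c *\<^sub>R X \<in> Jplus m B"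
  by (simp add: Jplus_def psd_def symmetric_mat_iff frob_scaleR_right
      scaleR_matrix_vector_assoc[symmetric])

lemma optimal_normalized_outer:
  assumes lower: "\<And>X. X \<in> Jplus m B \<Longrightarrow> t * frob H X \<le> frob Q X"
    and x: "outer x \<in> Jplus m B" "frob H (outer x) > 0"
    and tight: "frob Q (outer x) = t * frob H (outer x)"
  obtains z where "frob H (outer z) = 1" and "frob Q (outer z) = t"
    and "optimal_in Q (sdp_feasible m B H) (outer z)"
    and "optimal_in Q (qcqp_feasible m B H) (outer z)"
proof -
  define z where "z = (1 / sqrt (frob H (outer x))) *\<^sub>R x"
  have outer_z: "outer z = (1 / frob H (outer x)) *\<^sub>R outer x"
    using x(2) by (simp add: z_def outer_scaleR power_divide)
  have Hz: "frob H (outer z) = 1" and Qz: "frob Q (outer z) = t"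
    using x(2) by (simp_all add: outer_z frob_scaleR_right tight)
  have "outer z \<in> Jplus m B"
    using x by (simp add: outer_z Jplus_scaleR)
  moreover have "rank (outer z) = 1"
    using Hz by (intro rank_outer) (auto simp: outer_def frob_def)
  moreover have "t \<le> frob Q Z" if "Z \<in> sdp_feasible m B H" for Z
    using lower that by (force simp: sdp_feasible_def)
  ultimately show thesis
    using that Hz Qz by (auto simp: optimal_in_def sdp_feasible_def qcqp_feasible_def)
qed

theorem mainTheorem4:
  fixes Q H Xbar Ybar :: "real^'n^'n" and B :: "nat \<Rightarrow> real^'n^'n" and m :: nat
    and tbar :: real and ybar :: "nat \<Rightarrow> real"
  assumes symQ: "symmetric_mat Q" and symH: "symmetric_mat H"
    and symB: "\<forall>k\<in>{1..m}. symmetric_mat (B k)"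
    and condB: "condition_B m B"
    and symX: "symmetric_mat Xbar"
    and Xfeas: "Xbar \<in> Jplus m B" and HX: "frob H Xbar = 1"
    and ypos: "\<forall>k\<in>{1..m}. ybar k \<ge> 0"
    and Ypsd: "psd Ybar"
    and dual: "Q - tbar *\<^sub>R H - (\<Sum>k=1..m. ybar k *\<^sub>R B k) = Ybar"
    and compl: "\<forall>k\<in>{1..m}. ybar k * frob (B k) Xbar = 0"
    and YX: "frob Ybar Xbar = 0"
    and active: "\<exists>k\<in>{1..m}. frob (B k) Xbar = 0"
  shows "\<exists>(x::real^'n) \<tau>. \<tau> \<ge> 1 / real (rank Xbar) \<and> frob H (outer x) = \<tau> \<and>
           optimal_in Q (sdp_feasible m B H) ((1/\<tau>) *\<^sub>R outer x) \<and>
           optimal_in Q (qcqp_feasible m B H) ((1/\<tau>) *\<^sub>R outer x) \<and>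
           frob Q ((1/\<tau>) *\<^sub>R outer x) = frob Q Xbar"
proof -
  obtain k where k: "k \<in> {1..m}" "frob (B k) Xbar = 0"
    using active by blast
  have feasible: "X \<in> Jplus m B" if "psd X" and "frob (B k) X = 0" for X
    using condB k(1) that by (auto simp: condition_B_def)
  have lower: "tbar * frob H X \<le> frob Q X" if "X \<in> Jplus m B" for X
    using weak_duality[OF dual Ypsd ypos that] .
  have Q_Xbar: "frob Q Xbar = tbar"
    using frob_eq_dual_decomposition[OF dual, of Xbar] YX HX compl by simp
  obtain x where x: "frob (B k) (outer x) = 0" "frob H (outer x) > 0" "psd (Xbar - outer x)"
    using psd_outer_summand_frob_zero[of Xbar "B k" H] Xfeas k(2) HX by (auto simp: Jplus_def)
  have "tbar * frob H (outer x) \<le> frob Q (outer x)"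
    using lower[OF feasible[OF psd_outer x(1)]] .
  moreover have "tbar * frob H (Xbar - outer x) \<le> frob Q (Xbar - outer x)"
    using x(1,3) k(2) by (intro lower feasible) (simp_all add: frob_diff_right)
  ultimately have "frob Q (outer x) = tbar * frob H (outer x)"
    using Q_Xbar HX by (simp add: frob_diff_right right_diff_distrib)
  then obtain z where z: "frob H (outer z) = 1" "frob Q (outer z) = tbar"
    "optimal_in Q (sdp_feasible m B H) (outer z)" "optimal_in Q (qcqp_feasible m B H) (outer z)"
    using optimal_normalized_outer[OF lower feasible[OF psd_outer x(1)] x(2)] by blast
  txt \<open>As x may be rescaled freely, \<tau> = 1 is admissible for every rank.\<close>
  have "1 \<ge> 1 / real (rank Xbar)"
    by (cases "rank Xbar = 0") auto
  then show ?thesis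
    using z Q_Xbar by (intro exI[of _ z] exI[of _ 1]) simp
qed

end
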